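(* Let $x$ be a trajectory solution of (MTRIGS). For $i=1,\dots,m$ define $\mathcal W_i(t):=f_i(x(t))+\frac{\beta}{2t^p}\|x(t)\|^2+\frac12\|\dot x(t)\|^2$. Then for every $i$ and almost every $t\ge t_0$, $$\frac{d}{dt}\mathcal W_i(t)\le-\frac{p\beta}{2t^{p+1}}\|x(t)\|^2-\frac{\alpha}{t^q}\|\dot x(t)\|^2\le0 .$$ Moreover, with $a\in\mathbb R^m$, $a_i:=\frac{\beta}{2t_0^p}\|x_0\|^2+\frac12\|v_0\|^2$, one has $x(t)\in\mathcal L(F,F(x_0)+a)$ for all $t\ge t_0$.
   Context: $\mathcal H$ real Hilbert space; $f_1,\dots,f_m$ convex, continuously differentiable with Lipschitz gradients; $F=(f_1,\dots,f_m)^\top$; $\mathcal L(F,b):=\{x:f_i(x)\le b_i\ \forall i\}$. Parameters $t_0>0$, $\alpha,\beta>0$, $q\in(0,1]$, $p\in(0,2]$, initial data $x_0,v_0$. $C(x):=\operatorname{conv}\{\nabla f_i(x)\}$. A trajectory solution of (MTRIGS) is $x:[t_0,\infty)\to\mathcal H$, continuously differentiable, with $\dot x$ absolutely continuous on each $[t_0,T]$ and a.e. derivative $\ddot x$ (Bochner measurable, $\dot x(t)=\dot x(t_0)+\int_{t_0}^t\ddot x$), satisfying $\frac{\alpha}{t^q}\dot x(t)+\operatorname{proj}_{C(x(t))+\frac{\beta}{t^p}x(t)+\ddot x(t)}(0)=0$ for a.e. $t\ge t_0$, $x(t_0)=x_0$, $\dot x(t_0)=v_0$. *)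

theory Defs
  imports "HOL-Analysis.Analysis"
begin

text \<open>Metric projection of y onto a set K (unique nearest point; well defined for
  nonempty closed convex K in a Hilbert space).\<close>
definition proj_set :: "'a::real_inner set \<Rightarrow> 'a \<Rightarrow> 'a" where
  "proj_set K y = (THE z. z \<in> K \<and> (\<forall>w\<in>K. dist y z \<le> dist y w))"

definition abs_cont_on :: "real set \<Rightarrow> (real \<Rightarrow> 'a::real_normed_vector) \<Rightarrow> bool" where
  "abs_cont_on S g \<longleftrightarrow>
     (\<forall>\<epsilon>>0. \<exists>\<delta>>0. \<forall>(n::nat) (a::nat \<Rightarrow> real) b.
        (\<forall>k<n. a k \<in> S \<and> b k \<in> S \<and> a k \<le> b k) \<and>
        disjoint_family_on (\<lambda>k. {a k<..<b k}) {..<n} \<and>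
        (\<Sum>k<n. b k - a k) < \<delta> \<longrightarrow>
        (\<Sum>k<n. norm (g (b k) - g (a k))) < \<epsilon>)"

definition Cset :: "(nat \<Rightarrow> 'a \<Rightarrow> 'a::real_inner) \<Rightarrow> nat \<Rightarrow> 'a \<Rightarrow> 'a set" where
  "Cset df m y = convex hull ((\<lambda>i. df i y) ` {1..m})"

definition level_set :: "(nat \<Rightarrow> 'a \<Rightarrow> real) \<Rightarrow> nat \<Rightarrow> (nat \<Rightarrow> real) \<Rightarrow> 'a set" where
  "level_set f m b = {y. \<forall>i\<in>{1..m}. f i y \<le> b i}"

definition mtrigs_solution ::
  "(nat \<Rightarrow> 'a \<Rightarrow> 'a::{real_inner,complete_space}) \<Rightarrow> nat \<Rightarrow> real \<Rightarrow> real \<Rightarrow> real \<Rightarrow> real \<Rightarrow> real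
    \<Rightarrow> 'a \<Rightarrow> 'a \<Rightarrow> (real \<Rightarrow> 'a) \<Rightarrow> (real \<Rightarrow> 'a) \<Rightarrow> (real \<Rightarrow> 'a) \<Rightarrow> bool" where
  "mtrigs_solution df m t0 \<alpha> \<beta> q p x0 v0 x xd xdd \<longleftrightarrow>
     (\<forall>t\<ge>t0. (x has_vector_derivative xd t) (at t within {t0..})) \<and>
     continuous_on {t0..} xd \<and>
     (\<forall>T\<ge>t0. abs_cont_on {t0..T} xd) \<and>
     (AE t in lborel. t \<ge> t0 \<longrightarrow> (xd has_vector_derivative xdd t) (at t within {t0..})) \<and>
     xdd \<in> borel_measurable (restrict_space lebesgue {t0..}) \<and>
     (\<forall>t\<ge>t0. (xdd has_integral (xd t - xd t0)) {t0..t}) \<and>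
     (AE t in lborel. t \<ge> t0 \<longrightarrow>
        (\<alpha> / t powr q) *\<^sub>R xd t
        + proj_set ((\<lambda>c. c + (\<beta> / t powr p) *\<^sub>R x t + xdd t) ` Cset df m (x t)) 0 = 0) \<and>
     x t0 = x0 \<and> xd t0 = v0"

end

(*
  At almost every time the inclusion says that -(alpha/t^q) xd is the least-norm element of
  C(x) + (beta/t^p) x + xdd, a compact convex set; its variational characterisation gives
  <xd, grad f_i(x) + (beta/t^p) x + xdd> <= -(alpha/t^q) |xd|^2 for every i, which is exactly the
  claimed bound on the derivative of W_i.

  Integrating this almost-everywhere inequality needs care. On each [t0, T] the inclusion bounds
  xdd (it is -(alpha/t^q) xd - g - (beta/t^p) x with g in C(x)), so xd and hence W_i are Lipschitz
  there. A continuous function whose derivative is nonpositive off a null set E, and which is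
  pointwise Lipschitz on E (so that it maps E to a null set), is nonincreasing. Hence
  f_i(x(t)) <= W_i(t) <= W_i(t0).
*)

theory Submission
  imports Defs
begin

lemma proj_set_closest:
  fixes K :: "'a::real_inner set"
  assumes "compact K" "convex K" "K \<noteq> {}"
  shows "proj_set K y \<in> K \<and> (\<forall>w\<in>K. dist y (proj_set K y) \<le> dist y w)"
proof -
  let ?closest = "\<lambda>z. z \<in> K \<and> (\<forall>w\<in>K. dist y z \<le> dist y w)"
  have "continuous_on K (\<lambda>w. dist y w)"
    by (intro continuous_intros)
  then obtain z where z: "?closest z"
    using continuous_attains_inf[OF assms(1,3)] by blast
  have "w = z" if "?closest w" for w
    using any_closest_point_unique[OF assms(2) compact_imp_closed[OF assms(1)]] that z by blast
  then show ?thesis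
    unfolding proj_set_def using theI[of ?closest, OF z] by blast
qed

lemma proj_set_inner_le:
  fixes K :: "'a::real_inner set"
  assumes "compact K" "convex K" "k \<in> K"
  shows "(y - proj_set K y) \<bullet> (k - proj_set K y) \<le> 0"
  using assms proj_set_closest[of K y]
  by (intro any_closest_point_dot[OF assms(2) compact_imp_closed]) auto

lemma scaled_plus_proj_eq_zeroD:
  fixes C :: "'a::real_inner set"
  assumes C: "compact C" "convex C" "C \<noteq> {}" and a: "a > 0"
    and eq: "a *\<^sub>R v + proj_set ((\<lambda>c. c + u) ` C) 0 = 0"
  shows "\<forall>c\<in>C. v \<bullet> (c + u) \<le> - a * (norm v)\<^sup>2"
    and "\<exists>g\<in>C. u = - a *\<^sub>R v - g"
proof -
  let ?K = "(\<lambda>c. c + u) ` C"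
  have K: "compact ?K" "convex ?K" "?K \<noteq> {}"
  proof -
    have "?K = (+) u ` C" by (auto simp: add.commute)
    then show "compact ?K" "convex ?K" "?K \<noteq> {}"
      using C by (auto intro: compact_translation)
  qed
  have w: "proj_set ?K 0 = - a *\<^sub>R v"
    using eq by (simp add: eq_neg_iff_add_eq_0 add.commute)
  show "\<forall>c\<in>C. v \<bullet> (c + u) \<le> - a * (norm v)\<^sup>2"
  proof
    fix c assume "c \<in> C"
    then have "(0 - proj_set ?K 0) \<bullet> (c + u - proj_set ?K 0) \<le> 0"
      using K by (intro proj_set_inner_le) auto
    then have "a * (v \<bullet> (c + u) + a * (v \<bullet> v)) \<le> 0"
      by (simp add: w inner_add_right algebra_simps)
    then show "v \<bullet> (c + u) \<le> - a * (norm v)\<^sup>2"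
      using a by (simp add: mult_le_0_iff power2_norm_eq_inner)
  qed
  obtain g where "g \<in> C" "proj_set ?K 0 = g + u"
    using proj_set_closest[OF K] by auto
  then show "\<exists>g\<in>C. u = - a *\<^sub>R v - g"
    using w by (metis add_diff_cancel_left')
qed

lemma sqnorm_has_real_derivative:
  fixes y :: "real \<Rightarrow> 'a::real_inner"
  assumes "(y has_vector_derivative y') (at t within S)"
  shows "((\<lambda>s. (norm (y s))\<^sup>2) has_real_derivative 2 * (y t \<bullet> y')) (at t within S)"
proof -
  have "((\<lambda>s. y s \<bullet> y s) has_derivative (\<lambda>h. y t \<bullet> (h *\<^sub>R y') + (h *\<^sub>R y') \<bullet> y t)) (at t within S)"
    using has_derivative_inner[OF assms[unfolded has_vector_derivative_def] assms[unfolded has_vector_derivative_def]] .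
  then show ?thesis
    unfolding has_field_derivative_def power2_norm_eq_inner
    by (rule has_derivative_eq_rhs) (auto simp: inner_commute algebra_simps)
qed

lemma potential_has_real_derivative:
  fixes x :: "real \<Rightarrow> 'a::real_inner"
  assumes t: "t > 0"
    and dx: "(x has_vector_derivative v) (at t within S)"
    and df: "(f has_derivative (\<lambda>h. g \<bullet> h)) (at (x t))"
  shows "((\<lambda>s. f (x s) + \<beta> / (2 * s powr p) * (norm (x s))\<^sup>2) has_real_derivative
           g \<bullet> v - p * \<beta> / (2 * t powr (p + 1)) * (norm (x t))\<^sup>2 + \<beta> / t powr p * (x t \<bullet> v))
         (at t within S)"
proof -
  have df_x: "((\<lambda>s. f (x s)) has_real_derivative g \<bullet> v) (at t within S)"
    using has_derivative_compose[OF dx[unfolded has_vector_derivative_def] df]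
    unfolding has_field_derivative_def
    by (rule has_derivative_eq_rhs) (auto simp: mult.commute)
  have "((\<lambda>s. \<beta> / (2 * s powr p)) has_real_derivative - (p * \<beta> / (2 * t powr (p + 1)))) (at t)"
  proof -
    have "((\<lambda>s. \<beta> / (2 * s powr p)) has_real_derivative
            - (\<beta> * (2 * (p * t powr (p - 1)))) / (2 * t powr p)^2) (at t)"
      using t by (auto intro!: derivative_eq_intros simp: power2_eq_square)
    moreover have "- (\<beta> * (2 * (p * t powr (p - 1)))) / (2 * t powr p)^2
                   = - (p * \<beta> / (2 * t powr (p + 1)))"
      using t by (simp add: powr_diff powr_add field_simps power2_eq_square)
    ultimately show ?thesis by simp
  qed
  then have "((\<lambda>s. \<beta> / (2 * s powr p)) has_real_derivative - (p * \<beta> / (2 * t powr (p + 1))))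
               (at t within S)"
    by (rule has_field_derivative_at_within)
  from DERIV_add[OF df_x DERIV_mult[OF this sqnorm_has_real_derivative[OF dx]]]
  show ?thesis
    by (rule DERIV_cong) (use t in \<open>simp add: field_simps\<close>)
qed

lemma has_real_derivative_imp_pointwise_lipschitz:
  fixes f :: "real \<Rightarrow> real"
  assumes "(f has_real_derivative D) (at t within S)"
  shows "\<exists>T B. open T \<and> t \<in> T \<and> (\<forall>y\<in>S \<inter> T. \<bar>f y - f t\<bar> \<le> B * \<bar>y - t\<bar>)"
proof -
  have "((\<lambda>y. (f y - f t) / (y - t)) \<longlongrightarrow> D) (at t within S)"
    using assms by (simp add: has_field_derivative_iff)
  then have "eventually (\<lambda>y. dist ((f y - f t) / (y - t)) D < 1) (at t within S)"
    by (rule tendstoD) simp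
  then obtain T where T: "open T" "t \<in> T"
    and near: "\<And>y. y \<in> T \<Longrightarrow> y \<in> S \<Longrightarrow> y \<noteq> t \<Longrightarrow> dist ((f y - f t) / (y - t)) D < 1"
    unfolding eventually_at_topological by blast
  have "\<bar>f y - f t\<bar> \<le> (\<bar>D\<bar> + 1) * \<bar>y - t\<bar>" if "y \<in> S \<inter> T" for y
  proof (cases "y = t")
    case False
    then have "\<bar>(f y - f t) / (y - t) - D\<bar> < 1"
      using near[of y] that by (auto simp: dist_real_def)
    then have "\<bar>(f y - f t) / (y - t)\<bar> \<le> \<bar>D\<bar> + 1"
      by linarith
    then show ?thesis using False by (simp add: abs_divide divide_le_eq)
  qed simp
  then show ?thesis using T by blast
qed

lemma abs_half_sqnorm_diff_le:
  fixes a b :: "'a::real_normed_vector"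
  assumes "norm a \<le> c" "norm b \<le> c"
  shows "\<bar>(norm a)\<^sup>2 / 2 - (norm b)\<^sup>2 / 2\<bar> \<le> c * norm (a - b)"
proof -
  have factor: "(norm a)\<^sup>2 / 2 - (norm b)\<^sup>2 / 2 = (norm a - norm b) * ((norm a + norm b) / 2)"
    by (simp add: power2_eq_square algebra_simps add_divide_distrib diff_divide_distrib)
  have "\<bar>(norm a)\<^sup>2 / 2 - (norm b)\<^sup>2 / 2\<bar> = \<bar>norm a - norm b\<bar> * ((norm a + norm b) / 2)"
    unfolding factor abs_mult by simp
  also have "\<dots> \<le> norm (a - b) * c"
    using assms by (intro mult_mono norm_triangle_ineq3) auto
  finally show ?thesis by (simp add: mult.commute)
qed

lemma continuous_on_last_crossing:
  fixes V :: "real \<Rightarrow> real"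
  assumes "a \<le> b" and cont: "continuous_on {a..b} V" and "V a \<le> y" "y < V b"
  shows "\<exists>s\<in>{a..<b}. V s = y \<and> (\<forall>u\<in>{s<..b}. y < V u)"
proof -
  define S where "S = {a..b} \<inter> V -` {..y}"
  have "a \<in> S" using assms \<open>a \<le> b\<close> by (simp add: S_def)
  moreover have "closed S"
    unfolding S_def by (rule continuous_closed_preimage[OF cont]) auto
  moreover have bdd: "bdd_above S"
    unfolding S_def by (rule bdd_aboveI[of _ b]) auto
  ultimately have sS: "Sup S \<in> S"
    by (intro closed_contains_Sup) auto
  have above: "u \<notin> S" if "Sup S < u" for u
    using that cSup_upper[OF _ bdd] by fastforce
  obtain c where c: "Sup S \<le> c" "c \<le> b" "V c = y"
    using IVT'[of V "Sup S" y b] sS assms continuous_on_subset[OF cont]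
    by (fastforce simp: S_def)
  have "V (Sup S) = y"
    using above[of c] c sS by (force simp: S_def)
  moreover have "Sup S < b"
    using sS assms \<open>V (Sup S) = y\<close> by (auto simp: S_def order.order_iff_strict)
  moreover have "y < V u" if "u \<in> {Sup S<..b}" for u
    using above[of u] that sS by (auto simp: S_def)
  ultimately show ?thesis
    using sS by (auto simp: S_def)
qed

(* If V a < V b, pick a level y between them not attained on E and the last time s with V s = y:
   V exceeds y right after s, contradicting V' s < 0. *)
lemma DERIV_neg_ae_imp_decreasing:
  fixes V :: "real \<Rightarrow> real"
  assumes "a \<le> b" and cont: "continuous_on {a..b} V"
    and null_image: "negligible (V ` (E \<inter> {a..b}))"
    and der: "\<And>t. t \<in> {a<..<b} - E \<Longrightarrow> \<exists>D. (V has_real_derivative D) (at t) \<and> D < 0"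
  shows "V b \<le> V a"
proof (rule ccontr)
  assume "\<not> V b \<le> V a"
  then have "\<not> negligible {V a<..<V b}"
    by (intro open_not_negligible) auto
  then have "\<not> {V a<..<V b} \<subseteq> V ` (E \<inter> {a..b})"
    using null_image negligible_subset by blast
  then obtain y where y: "V a < y" "y < V b" "y \<notin> V ` (E \<inter> {a..b})"
    by (force simp: subset_iff)
  then obtain s where s: "s \<in> {a..<b}" "V s = y" and after: "\<And>u. u \<in> {s<..b} \<Longrightarrow> y < V u"
    using continuous_on_last_crossing[OF \<open>a \<le> b\<close> cont] by (metis less_imp_le)
  have "s \<in> {a<..<b} - E"
    using s y by (cases "s = a") auto
  then obtain D where "(V has_real_derivative D) (at s)" "D < 0"
    using der by blast
  then obtain d where "d > 0" and dec: "\<And>h. h > 0 \<Longrightarrow> h < d \<Longrightarrow> V (s + h) < V s"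
    using DERIV_neg_dec_right by blast
  define h where "h = min (d / 2) ((b - s) / 2)"
  have "h > 0" "h < d" "s + h \<in> {s<..b}"
    using \<open>d > 0\<close> s(1) by (auto simp: h_def min_def field_simps)
  then show False
    using dec[of h] after[of "s + h"] s(2) by linarith
qed

lemma negligible_image_minus_linear:
  fixes W :: "real \<Rightarrow> real"
  assumes "negligible S"
    and lip: "\<And>t. t \<in> S \<Longrightarrow> \<exists>T B. open T \<and> t \<in> T \<and> (\<forall>y\<in>S \<inter> T. norm (W y - W t) \<le> B * norm (y - t))"
  shows "negligible ((\<lambda>t. W t - k * t) ` S)"
proof (rule negligible_locally_Lipschitz_image[OF _ \<open>negligible S\<close>])
  fix t assume "t \<in> S"
  then obtain T B where "open T" "t \<in> T"
    and B: "\<forall>y\<in>S \<inter> T. norm (W y - W t) \<le> B * norm (y - t)"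
    using lip by blast
  moreover have "norm ((W y - k * y) - (W t - k * t)) \<le> (B + \<bar>k\<bar>) * norm (y - t)"
    if "y \<in> S \<inter> T" for y
  proof -
    have "(W y - k * y) - (W t - k * t) = (W y - W t) - k * (y - t)"
      by (simp add: algebra_simps)
    then have "norm ((W y - k * y) - (W t - k * t)) \<le> norm (W y - W t) + \<bar>k\<bar> * norm (y - t)"
      using abs_triangle_ineq4[of "W y - W t" "k * (y - t)"] by (simp add: abs_mult)
    moreover have "norm (W y - W t) \<le> B * norm (y - t)"
      using B that by blast
    ultimately show ?thesis
      by (simp add: algebra_simps)
  qed
  ultimately show "\<exists>T B. open T \<and> t \<in> T \<and>
                     (\<forall>y\<in>S \<inter> T. norm ((W y - k * y) - (W t - k * t)) \<le> B * norm (y - t))"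
    by blast
qed simp

(* Tilting W by - k t makes its derivative negative off E, and the Lipschitz bound keeps the
   image of E null; let k tend to 0. *)
lemma DERIV_nonpos_ae_imp_decreasing:
  fixes W :: "real \<Rightarrow> real"
  assumes "a \<le> b" and cont: "continuous_on {a..b} W" and E: "negligible E"
    and der: "\<And>t. t \<in> {a<..<b} - E \<Longrightarrow> \<exists>D. (W has_real_derivative D) (at t) \<and> D \<le> 0"
    and lip: "\<And>t. t \<in> E \<inter> {a..b} \<Longrightarrow> \<exists>T B. open T \<and> t \<in> T \<and>
               (\<forall>y\<in>(E \<inter> {a..b}) \<inter> T. norm (W y - W t) \<le> B * norm (y - t))"
  shows "W b \<le> W a"
proof (rule field_le_epsilon)
  fix \<epsilon> :: real assume "\<epsilon> > 0"
  define k where "k = \<epsilon> / (b - a + 1)"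
  have k: "k > 0" "k * (b - a) \<le> \<epsilon>"
    using \<open>\<epsilon> > 0\<close> \<open>a \<le> b\<close> by (auto simp: k_def field_simps)
  have "W b - k * b \<le> W a - k * a"
  proof (rule DERIV_neg_ae_imp_decreasing[OF \<open>a \<le> b\<close>, where E = E])
    show "continuous_on {a..b} (\<lambda>t. W t - k * t)"
      by (intro continuous_intros cont)
    show "negligible ((\<lambda>t. W t - k * t) ` (E \<inter> {a..b}))"
      using E lip by (intro negligible_image_minus_linear) (auto intro: negligible_subset)
    fix t assume "t \<in> {a<..<b} - E"
    then obtain D where "(W has_real_derivative D) (at t)" "D \<le> 0"
      using der by blast
    then have "((\<lambda>t. W t - k * t) has_real_derivative D - k) (at t)" "D - k < 0"
      using k by (auto intro!: derivative_eq_intros)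
    then show "\<exists>D. ((\<lambda>t. W t - k * t) has_real_derivative D) (at t) \<and> D < 0"
      by blast
  qed
  then show "W b \<le> W a + \<epsilon>"
    using k by (simp add: algebra_simps)
qed

lemma has_integral_ae_bounded_imp_lipschitz:
  fixes F g :: "real \<Rightarrow> 'a::banach"
  assumes int: "\<And>t. t \<in> {a..b} \<Longrightarrow> (g has_integral (F t - F a)) {a..t}"
    and N: "negligible N" and bound: "\<And>r. r \<in> {a..b} - N \<Longrightarrow> norm (g r) \<le> M" and "0 \<le> M"
    and "s \<in> {a..b}" "u \<in> {a..b}"
  shows "norm (F u - F s) \<le> M * \<bar>u - s\<bar>"
proof -
  have ordered: "norm (F u - F s) \<le> M * (u - s)" if su: "a \<le> s" "s \<le> u" "u \<le> b" for s u
  proof -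
    have "g integrable_on {a..u}"
      using int[of u] su by (auto intro: has_integral_integrable)
    then obtain j where j: "(g has_integral j) {s..u}"
      using integrable_subinterval_real[of g a u s u] su unfolding integrable_on_def by auto
    have "(g has_integral (F s - F a)) {a..s}"
      using int[of s] su by simp
    then have "(g has_integral (F s - F a + j)) {a..u}"
      using has_integral_combine[OF su(1,2) _ j] by blast
    moreover have "(g has_integral (F u - F a)) {a..u}"
      using int[of u] su by simp
    ultimately have "F s - F a + j = F u - F a"
      by (rule has_integral_unique)
    then have "j = F u - F s"
      by (simp add: algebra_simps)
    with j have "(g has_integral (F u - F s)) (cbox s u)"
      by simp
    then have spike: "((\<lambda>r. if r \<in> N then 0 else g r) has_integral (F u - F s)) (cbox s u)"
      by (rule has_integral_spike[OF N, rotated]) auto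
    have "norm (if r \<in> N then 0 else g r) \<le> M" if "r \<in> cbox s u" for r
      using bound[of r] that su \<open>0 \<le> M\<close> by auto
    from has_integral_bound[OF \<open>0 \<le> M\<close> spike this] show ?thesis
      using su by simp
  qed
  show ?thesis
  proof (cases "s \<le> u")
    case True then show ?thesis using ordered[of s u] assms by auto
  next
    case False then show ?thesis using ordered[of u s] assms by (auto simp: norm_minus_commute)
  qed
qed

(* Pairing with e = F u - F s reduces to the real-valued case, so no completeness is needed. *)
lemma has_integral_ae_bounded_imp_lipschitz_inner:
  fixes F g :: "real \<Rightarrow> 'a::real_inner"
  assumes int: "\<And>t. t \<in> {a..b} \<Longrightarrow> (g has_integral (F t - F a)) {a..t}"
    and N: "negligible N" and bound: "\<And>r. r \<in> {a..b} - N \<Longrightarrow> norm (g r) \<le> M" and "0 \<le> M"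
    and "s \<in> {a..b}" "u \<in> {a..b}"
  shows "norm (F u - F s) \<le> M * \<bar>u - s\<bar>"
proof -
  define e where "e = F u - F s"
  have "((\<lambda>r. e \<bullet> g r) has_integral (e \<bullet> F t - e \<bullet> F a)) {a..t}" if "t \<in> {a..b}" for t
    using has_integral_linear[OF int[OF that] bounded_linear_inner_right[of e]]
    by (simp add: o_def inner_diff_right)
  moreover have "norm (e \<bullet> g r) \<le> norm e * M" if "r \<in> {a..b} - N" for r
    using Cauchy_Schwarz_ineq2[of e "g r"] bound[OF that]
    by (simp add: mult_left_mono order_trans)
  ultimately have "norm (e \<bullet> F u - e \<bullet> F s) \<le> norm e * M * \<bar>u - s\<bar>"
    using N assms(4-6) by (intro has_integral_ae_bounded_imp_lipschitz[where g = "\<lambda>r. e \<bullet> g r"]) auto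
  moreover have "e \<bullet> F u - e \<bullet> F s = norm e * norm e"
    by (simp add: e_def power2_norm_eq_inner flip: power2_eq_square inner_diff_right)
  ultimately have "norm e * norm e \<le> norm e * (M * \<bar>u - s\<bar>)"
    by (simp add: algebra_simps)
  then show ?thesis
    using \<open>0 \<le> M\<close> unfolding e_def by (cases "F u = F s") (auto simp: mult_le_cancel_left_pos)
qed

lemma AE_lborel_negligible_exceptions:
  assumes "AE t in lborel. P t"
  obtains N where "negligible N" "\<And>t. t \<notin> N \<Longrightarrow> P t"
proof -
  have "AE t in lebesgue. P t"
    using AE_completion[OF assms] by simp
  then show ?thesis
    using that unfolding eventually_ae_filter_negligible by blast
qed

lemma
  fixes df :: "nat \<Rightarrow> 'a \<Rightarrow> 'a::real_inner"
  assumes "1 \<le> m"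
  shows compact_Cset: "compact (Cset df m y)"
    and convex_Cset: "convex (Cset df m y)"
    and Cset_nonempty: "Cset df m y \<noteq> {}"
  using assms unfolding Cset_def
  by (auto intro: finite_imp_compact_convex_hull)

lemma Cset_subset_cball:
  fixes df :: "nat \<Rightarrow> 'a \<Rightarrow> 'a::real_inner"
  shows "Cset df m y \<subseteq> cball 0 (\<Sum>j\<in>{1..m}. norm (df j y))"
  unfolding Cset_def
proof (rule hull_minimal)
  show "(\<lambda>i. df i y) ` {1..m} \<subseteq> cball 0 (\<Sum>j\<in>{1..m}. norm (df j y))"
    by (auto intro!: member_le_sum)
qed simp

locale mtrigs_trajectory =
  fixes f :: "nat \<Rightarrow> 'a::{real_inner,complete_space} \<Rightarrow> real"
    and df :: "nat \<Rightarrow> 'a \<Rightarrow> 'a"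
    and m :: nat
    and t0 \<alpha> \<beta> q p :: real
    and x0 v0 :: 'a
    and x xd xdd :: "real \<Rightarrow> 'a"
  assumes m: "1 \<le> m"
    and grad: "\<And>i y. i \<in> {1..m} \<Longrightarrow> (f i has_derivative (\<lambda>h. df i y \<bullet> h)) (at y)"
    and grad_continuous: "\<And>i. i \<in> {1..m} \<Longrightarrow> continuous_on UNIV (df i)"
    and t0: "t0 > 0" and \<alpha>: "\<alpha> > 0" and \<beta>: "\<beta> > 0" and p: "p > 0"
    and sol: "mtrigs_solution df m t0 \<alpha> \<beta> q p x0 v0 x xd xdd"
begin

definition potential :: "nat \<Rightarrow> real \<Rightarrow> real" where
  "potential i s = f i (x s) + \<beta> / (2 * s powr p) * (norm (x s))\<^sup>2"

definition energy :: "nat \<Rightarrow> real \<Rightarrow> real" where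
  "energy i s = potential i s + (norm (xd s))\<^sup>2 / 2"

definition dissipation :: "real \<Rightarrow> real" where
  "dissipation t = p * \<beta> / (2 * t powr (p + 1)) * (norm (x t))\<^sup>2 + \<alpha> / t powr q * (norm (xd t))\<^sup>2"

definition regular :: "real \<Rightarrow> bool" where
  "regular t \<longleftrightarrow> (xd has_vector_derivative xdd t) (at t within {t0..}) \<and>
     (\<alpha> / t powr q) *\<^sub>R xd t
     + proj_set ((\<lambda>c. c + (\<beta> / t powr p) *\<^sub>R x t + xdd t) ` Cset df m (x t)) 0 = 0"

lemma position_has_derivative: "t \<ge> t0 \<Longrightarrow> (x has_vector_derivative xd t) (at t within {t0..})"
  using sol unfolding mtrigs_solution_def by blast

lemma continuous_on_position: "continuous_on {t0..} x"
  unfolding continuous_on_eq_continuous_within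
  using position_has_derivative has_vector_derivative_continuous by (metis atLeast_iff)

lemma continuous_on_velocity: "continuous_on {t0..} xd"
  using sol unfolding mtrigs_solution_def by blast

lemma velocity_has_integral: "t \<ge> t0 \<Longrightarrow> (xdd has_integral (xd t - xd t0)) {t0..t}"
  using sol unfolding mtrigs_solution_def by blast

lemma initial_values: "x t0 = x0" "xd t0 = v0"
  using sol unfolding mtrigs_solution_def by blast+

lemma AE_regular: "AE t in lborel. t \<ge> t0 \<longrightarrow> regular t"
proof -
  have "AE t in lborel. t \<ge> t0 \<longrightarrow> (xd has_vector_derivative xdd t) (at t within {t0..})"
    and "AE t in lborel. t \<ge> t0 \<longrightarrow> (\<alpha> / t powr q) *\<^sub>R xd t
          + proj_set ((\<lambda>c. c + (\<beta> / t powr p) *\<^sub>R x t + xdd t) ` Cset df m (x t)) 0 = 0"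
    using sol unfolding mtrigs_solution_def by blast+
  then show ?thesis
    unfolding regular_def by eventually_elim blast
qed

lemma regular_inclusion:
  assumes "t \<ge> t0" "regular t"
  shows "\<forall>c\<in>Cset df m (x t). xd t \<bullet> (c + ((\<beta> / t powr p) *\<^sub>R x t + xdd t))
                                \<le> - (\<alpha> / t powr q) * (norm (xd t))\<^sup>2"
    and "\<exists>g\<in>Cset df m (x t). (\<beta> / t powr p) *\<^sub>R x t + xdd t = - (\<alpha> / t powr q) *\<^sub>R xd t - g"
proof -
  have "(\<alpha> / t powr q) *\<^sub>R xd t
          + proj_set ((\<lambda>c. c + ((\<beta> / t powr p) *\<^sub>R x t + xdd t)) ` Cset df m (x t)) 0 = 0"
    using assms(2) unfolding regular_def by (simp add: add.assoc)
  moreover have "\<alpha> / t powr q > 0"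
    using \<alpha> t0 assms(1) by simp
  ultimately show "\<forall>c\<in>Cset df m (x t). xd t \<bullet> (c + ((\<beta> / t powr p) *\<^sub>R x t + xdd t))
                                \<le> - (\<alpha> / t powr q) * (norm (xd t))\<^sup>2"
    and "\<exists>g\<in>Cset df m (x t). (\<beta> / t powr p) *\<^sub>R x t + xdd t = - (\<alpha> / t powr q) *\<^sub>R xd t - g"
    using scaled_plus_proj_eq_zeroD[OF compact_Cset[OF m] convex_Cset[OF m] Cset_nonempty[OF m]]
    by blast+
qed

lemma dissipation_nonneg: "t > 0 \<Longrightarrow> 0 \<le> dissipation t"
  using p \<alpha> \<beta> unfolding dissipation_def by simp

lemma potential_has_derivative:
  assumes "t \<ge> t0" "i \<in> {1..m}"
  shows "(potential i has_real_derivative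
           df i (x t) \<bullet> xd t - p * \<beta> / (2 * t powr (p + 1)) * (norm (x t))\<^sup>2
           + \<beta> / t powr p * (x t \<bullet> xd t)) (at t within {t0..})"
  unfolding potential_def
  using potential_has_real_derivative[OF _ position_has_derivative grad] assms t0 by simp

lemma energy_has_derivative_le:
  assumes "t \<ge> t0" "regular t" "i \<in> {1..m}"
  shows "\<exists>D. (energy i has_real_derivative D) (at t within {t0..}) \<and> D \<le> - dissipation t"
proof -
  have "(xd has_vector_derivative xdd t) (at t within {t0..})"
    using assms(2) unfolding regular_def by blast
  from DERIV_add[OF potential_has_derivative[OF assms(1,3)]
      DERIV_cdivide[OF sqnorm_has_real_derivative[OF this], of 2]]
  have "(energy i has_real_derivative
          xd t \<bullet> (df i (x t) + ((\<beta> / t powr p) *\<^sub>R x t + xdd t))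
          - p * \<beta> / (2 * t powr (p + 1)) * (norm (x t))\<^sup>2) (at t within {t0..})"
    unfolding energy_def[abs_def]
    by (rule DERIV_cong) (simp add: inner_add_right inner_commute algebra_simps)
  moreover have "df i (x t) \<in> Cset df m (x t)"
    unfolding Cset_def using assms(3) by (intro hull_inc) auto
  ultimately show ?thesis
    using regular_inclusion(1)[OF assms(1,2)] unfolding dissipation_def
    by (intro exI[of _ "xd t \<bullet> (df i (x t) + ((\<beta> / t powr p) *\<^sub>R x t + xdd t))
          - p * \<beta> / (2 * t powr (p + 1)) * (norm (x t))\<^sup>2"]) auto
qed

lemma continuous_on_grad_position:
  assumes "i \<in> {1..m}"
  shows "continuous_on {t0..} (\<lambda>r. df i (x r))"
  using continuous_on_compose2[OF grad_continuous[OF assms] continuous_on_position] by simp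

lemma acceleration_bounded:
  assumes "t0 \<le> T"
  obtains M where "0 \<le> M" "\<And>r. r \<in> {t0..T} \<Longrightarrow> regular r \<Longrightarrow> norm (xdd r) \<le> M"
proof -
  define h where "h r = norm ((\<alpha> / r powr q) *\<^sub>R xd r) + (\<Sum>j\<in>{1..m}. norm (df j (x r)))
                        + norm ((\<beta> / r powr p) *\<^sub>R x r)" for r
  have sub: "{t0..T} \<subseteq> {t0..}" by auto
  have h_cont: "continuous_on {t0..T} h"
    unfolding h_def using t0
    by (intro continuous_intros continuous_on_subset[OF continuous_on_velocity sub]
        continuous_on_subset[OF continuous_on_position sub]
        continuous_on_subset[OF continuous_on_grad_position sub]) auto
  obtain M where "\<forall>y\<in>h ` {t0..T}. norm y \<le> M"
    using compact_imp_bounded[OF compact_continuous_image[OF h_cont compact_Icc]]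
    unfolding bounded_iff by blast
  then have M: "\<And>r. r \<in> {t0..T} \<Longrightarrow> norm (h r) \<le> M"
    by blast
  show thesis
  proof
    show "0 \<le> M"
      using M[of t0] assms by (meson atLeastAtMost_iff norm_ge_zero order.trans order_refl)
    fix r assume r: "r \<in> {t0..T}" "regular r"
    then obtain g where g: "g \<in> Cset df m (x r)"
      and "(\<beta> / r powr p) *\<^sub>R x r + xdd r = - (\<alpha> / r powr q) *\<^sub>R xd r - g"
      using regular_inclusion(2)[of r] by auto
    then have "xdd r = - ((\<alpha> / r powr q) *\<^sub>R xd r) - g - (\<beta> / r powr p) *\<^sub>R x r"
      by (simp add: algebra_simps)
    then have "norm (xdd r) \<le> norm (- ((\<alpha> / r powr q) *\<^sub>R xd r) - g) + norm ((\<beta> / r powr p) *\<^sub>R x r)"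
      by (metis norm_triangle_ineq4)
    also have "\<dots> \<le> norm ((\<alpha> / r powr q) *\<^sub>R xd r) + norm g + norm ((\<beta> / r powr p) *\<^sub>R x r)"
      using norm_triangle_ineq4[of "- ((\<alpha> / r powr q) *\<^sub>R xd r)" g] by simp
    also have "\<dots> \<le> h r"
      using g Cset_subset_cball[of df m "x r"] unfolding h_def by auto
    also have "\<dots> \<le> M"
      using M[OF r(1)] by simp
    finally show "norm (xdd r) \<le> M" .
  qed
qed

lemma regular_outside_negligible:
  obtains N where "negligible N" "\<And>t. t \<ge> t0 \<Longrightarrow> t \<notin> N \<Longrightarrow> regular t"
proof -
  obtain N where "negligible N" "\<And>t. t \<notin> N \<Longrightarrow> t0 \<le> t \<longrightarrow> regular t"
    using AE_lborel_negligible_exceptions[OF AE_regular] by blast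
  then show thesis
    using that by simp
qed

lemma velocity_lipschitz:
  assumes "t0 \<le> T"
  obtains L where "\<And>s u. s \<in> {t0..T} \<Longrightarrow> u \<in> {t0..T} \<Longrightarrow> norm (xd u - xd s) \<le> L * \<bar>u - s\<bar>"
proof -
  obtain N where N: "negligible N" "\<And>t. t \<ge> t0 \<Longrightarrow> t \<notin> N \<Longrightarrow> regular t"
    using regular_outside_negligible by blast
  obtain M where M: "0 \<le> M" "\<And>r. r \<in> {t0..T} \<Longrightarrow> regular r \<Longrightarrow> norm (xdd r) \<le> M"
    using acceleration_bounded[OF assms] by blast
  have "norm (xdd r) \<le> M" if "r \<in> {t0..T} - N" for r
    using M(2) N(2) that by simp
  with velocity_has_integral N(1) M(1)
  have "norm (xd u - xd s) \<le> M * \<bar>u - s\<bar>" if "s \<in> {t0..T}" "u \<in> {t0..T}" for s u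
    using that by (intro has_integral_ae_bounded_imp_lipschitz_inner) auto
  then show thesis
    by (rule that)
qed

lemma continuous_on_energy:
  assumes "i \<in> {1..m}"
  shows "continuous_on {t0..} (energy i)"
proof -
  have "continuous_on {t0..} (potential i)"
    unfolding continuous_on_eq_continuous_within
    using potential_has_derivative[OF _ assms] DERIV_continuous by blast
  then show ?thesis
    unfolding energy_def[abs_def] by (intro continuous_intros continuous_on_velocity) auto
qed

lemma energy_pointwise_lipschitz:
  assumes "t0 \<le> T" "i \<in> {1..m}" "t \<in> {t0..T}"
  shows "\<exists>U B. open U \<and> t \<in> U \<and> (\<forall>y\<in>{t0..T} \<inter> U. norm (energy i y - energy i t) \<le> B * norm (y - t))"
proof -
  have "t0 \<le> t"
    using assms(3) by simp
  from has_real_derivative_imp_pointwise_lipschitz[OF potential_has_derivative[OF this assms(2)]]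
  obtain U B where U: "open U" "t \<in> U"
    and B: "\<forall>y\<in>{t0..} \<inter> U. \<bar>potential i y - potential i t\<bar> \<le> B * \<bar>y - t\<bar>"
    by blast
  obtain L where L: "\<And>s u. s \<in> {t0..T} \<Longrightarrow> u \<in> {t0..T} \<Longrightarrow> norm (xd u - xd s) \<le> L * \<bar>u - s\<bar>"
    using velocity_lipschitz[OF assms(1)] by blast
  have xd_cont: "continuous_on {t0..T} xd"
    using continuous_on_velocity by (rule continuous_on_subset) auto
  obtain V where V: "\<forall>v\<in>xd ` {t0..T}. norm v \<le> V"
    using compact_imp_bounded[OF compact_continuous_image[OF xd_cont compact_Icc]]
    unfolding bounded_iff by blast
  have "norm (xd t) \<le> V"
    using V assms(3) by blast
  then have "0 \<le> V"
    by (rule order_trans[OF norm_ge_zero])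
  have "norm (energy i y - energy i t) \<le> (B + V * L) * norm (y - t)" if y: "y \<in> {t0..T} \<inter> U" for y
  proof -
    have "\<bar>(norm (xd y))\<^sup>2 / 2 - (norm (xd t))\<^sup>2 / 2\<bar> \<le> V * norm (xd y - xd t)"
      using V y assms(3) by (intro abs_half_sqnorm_diff_le) auto
    also have "\<dots> \<le> V * (L * \<bar>y - t\<bar>)"
      using L[of t y] y assms(3) \<open>0 \<le> V\<close> by (intro mult_left_mono) auto
    finally have "\<bar>(norm (xd y))\<^sup>2 / 2 - (norm (xd t))\<^sup>2 / 2\<bar> \<le> V * L * \<bar>y - t\<bar>"
      by simp
    moreover have "\<bar>potential i y - potential i t\<bar> \<le> B * \<bar>y - t\<bar>"
      using B y by auto
    ultimately show ?thesis
      unfolding energy_def by (simp add: algebra_simps)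
  qed
  then show ?thesis
    using U by blast
qed

lemma energy_decreasing:
  assumes "t0 \<le> T" "i \<in> {1..m}"
  shows "energy i T \<le> energy i t0"
proof -
  obtain N where N: "negligible N" "\<And>t. t \<ge> t0 \<Longrightarrow> t \<notin> N \<Longrightarrow> regular t"
    using regular_outside_negligible by blast
  show ?thesis
  proof (rule DERIV_nonpos_ae_imp_decreasing[OF assms(1) _ N(1)])
    show "continuous_on {t0..T} (energy i)"
      using continuous_on_energy[OF assms(2)] by (rule continuous_on_subset) auto
  next
    fix t assume t: "t \<in> {t0<..<T} - N"
    then have "t0 \<le> t" "regular t"
      using N(2) by auto
    then obtain D where D: "(energy i has_real_derivative D) (at t within {t0..})" "D \<le> - dissipation t"
      using energy_has_derivative_le[OF _ _ assms(2)] by blast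
    have "(energy i has_real_derivative D) (at t within {t0<..})"
      by (rule has_field_derivative_subset[OF D(1)]) auto
    moreover have "at t within {t0<..} = at t"
      using t by (intro at_within_open) auto
    ultimately have "(energy i has_real_derivative D) (at t)"
      by simp
    moreover have "D \<le> 0"
      using D(2) dissipation_nonneg[of t] \<open>t0 \<le> t\<close> t0 by linarith
    ultimately show "\<exists>D. (energy i has_real_derivative D) (at t) \<and> D \<le> 0"
      by blast
  next
    fix t assume "t \<in> N \<inter> {t0..T}"
    then obtain U B where "open U" "t \<in> U"
      and "\<forall>y\<in>{t0..T} \<inter> U. norm (energy i y - energy i t) \<le> B * norm (y - t)"
      using energy_pointwise_lipschitz[OF assms, of t] by blast
    then show "\<exists>U B. open U \<and> t \<in> U \<and>
                 (\<forall>y\<in>(N \<inter> {t0..T}) \<inter> U. norm (energy i y - energy i t) \<le> B * norm (y - t))"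
      by blast
  qed
qed

lemma AE_energy_has_derivative_le:
  assumes "i \<in> {1..m}"
  shows "AE t in lborel. t \<ge> t0 \<longrightarrow>
           (\<exists>D. (energy i has_real_derivative D) (at t within {t0..}) \<and>
                D \<le> - dissipation t \<and> - dissipation t \<le> 0)"
  using AE_regular
proof eventually_elim
  case (elim t)
  then show ?case
    using energy_has_derivative_le[OF _ _ assms] dissipation_nonneg[of t] t0 by fastforce
qed

lemma trajectory_in_level_set:
  assumes "t0 \<le> t"
  shows "x t \<in> level_set f m (\<lambda>i. f i x0 + (\<beta> / (2 * t0 powr p) * (norm x0)\<^sup>2 + (norm v0)\<^sup>2 / 2))"
  unfolding level_set_def
proof safe
  fix i assume i: "i \<in> {1..m}"
  have "f i (x t) \<le> energy i t"
    using \<beta> assms t0 by (simp add: energy_def potential_def)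
  also have "\<dots> \<le> energy i t0"
    using energy_decreasing[OF assms i] .
  finally show "f i (x t) \<le> f i x0 + (\<beta> / (2 * t0 powr p) * (norm x0)\<^sup>2 + (norm v0)\<^sup>2 / 2)"
    by (simp add: energy_def potential_def initial_values add.assoc)
qed

end

theorem mainTheorem10:
  fixes f :: "nat \<Rightarrow> 'a::{real_inner,complete_space} \<Rightarrow> real"
    and df :: "nat \<Rightarrow> 'a \<Rightarrow> 'a"
    and m :: nat
    and t0 \<alpha> \<beta> q p :: real
    and x0 v0 :: 'a
    and x xd xdd :: "real \<Rightarrow> 'a"
  assumes m: "1 \<le> m"
    and convex: "\<And>i. i \<in> {1..m} \<Longrightarrow> convex_on UNIV (f i)"
    and grad: "\<And>i y. i \<in> {1..m} \<Longrightarrow> (f i has_derivative (\<lambda>h. df i y \<bullet> h)) (at y)"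
    and lip: "\<And>i. i \<in> {1..m} \<Longrightarrow> \<exists>L. L-lipschitz_on UNIV (df i)"
    and t0: "t0 > 0" and \<alpha>: "\<alpha> > 0" and \<beta>: "\<beta> > 0"
    and q: "0 < q" "q \<le> 1" and p: "0 < p" "p \<le> 2"
    and sol: "mtrigs_solution df m t0 \<alpha> \<beta> q p x0 v0 x xd xdd"
  shows "(\<forall>i\<in>{1..m}. AE t in lborel. t \<ge> t0 \<longrightarrow>
            (\<exists>D. ((\<lambda>s. f i (x s) + \<beta> / (2 * s powr p) * (norm (x s))\<^sup>2 + (norm (xd s))\<^sup>2 / 2)
                    has_real_derivative D) (at t within {t0..}) \<and>
                 D \<le> - (p * \<beta> / (2 * t powr (p + 1))) * (norm (x t))\<^sup>2
                      - \<alpha> / t powr q * (norm (xd t))\<^sup>2 \<and>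
                 - (p * \<beta> / (2 * t powr (p + 1))) * (norm (x t))\<^sup>2
                      - \<alpha> / t powr q * (norm (xd t))\<^sup>2 \<le> 0))
       \<and> (\<forall>t\<ge>t0. x t \<in> level_set f m
            (\<lambda>i. f i x0 + (\<beta> / (2 * t0 powr p) * (norm x0)\<^sup>2 + (norm v0)\<^sup>2 / 2)))"
proof -
  have "continuous_on UNIV (df i)" if "i \<in> {1..m}" for i
    using lip[OF that] lipschitz_on_continuous_on by blast
  then interpret mtrigs_trajectory f df m t0 \<alpha> \<beta> q p x0 v0 x xd xdd
    using m grad t0 \<alpha> \<beta> p sol by unfold_locales
  have "- dissipation t = - (p * \<beta> / (2 * t powr (p + 1))) * (norm (x t))\<^sup>2
                          - \<alpha> / t powr q * (norm (xd t))\<^sup>2" for t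
    by (simp add: dissipation_def)
  moreover have "energy i = (\<lambda>s. f i (x s) + \<beta> / (2 * s powr p) * (norm (x s))\<^sup>2 + (norm (xd s))\<^sup>2 / 2)"
    for i
    by (simp add: fun_eq_iff energy_def potential_def)
  ultimately show ?thesis
    using AE_energy_has_derivative_le trajectory_in_level_set by auto
qed

end
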